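(* Run WSU-UX with $K=2$ and any valid $(\eta,\gamma)$ on the two-phase loss sequence. Let $t_0>T_1$ be a round with $0<\pi_{t_0,1}\le\frac14$. Suppose arm 2 is pulled (i.e. $I_s=2$) in rounds $t_1<t_2<\dots<t_m$ with $t_0\le t_1$ and $t_m\le T$, where $m\ge \frac{2}{\eta}\cdot\frac{1}{1-2\pi_{t_0,1}}$. Then $\pi_{t_m+1,1}\ge 2\pi_{t_0,1}$.
   Context: WSU-UX. Fix integers $K\ge 2$ and $T\ge 1$ and hyperparameters $\eta,\gamma$. The pair $(\eta,\gamma)$ is called valid if $\eta,\gamma\in(0,1/2)$ and $\eta K/\gamma\le 1/2$. Given a fixed loss sequence $\ell_t\in[0,1]^K$, WSU-UX sets $\pi_{1,i}=1/K$ and in each round $t$: forms $\tilde\pi_{t,i}=(1-\gamma)\pi_{t,i}+\gamma/K$; draws $I_t$ with $\Pr(I_t=i\mid\mathcal F_{t-1})=\tilde\pi_{t,i}$; sets $\hat\ell_{t,i}=\ell_{t,i}\mathbf 1[I_t=i]/\tilde\pi_{t,i}$; and updates $\pi_{t+1,i}=\pi_{t,i}\bigl(1-\eta(\hat\ell_{t,i}-\sum_{j}\pi_{t,j}\hat\ell_{t,j})\bigr)$; $\mathcal F_t$ is the history generated by $I_1,\dots,I_t$. Two-phase loss sequence ($K=2$, $T$ a multiple of $100$, $T_1=T/100$): $\ell_{t,1}=1,\ell_{t,2}=0$ for $1\le t\le T_1$ and $\ell_{t,1}=0,\ell_{t,2}=1$ for $T_1<t\le T$. (For $t>T_1$, rounds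 in which arm 1 is pulled leave $\pi_t$ unchanged.) *)

theory Defs
  imports Complex_Main
begin

text \<open>Loss sequence: ell t i (round t, arm i).
  The realized arm sequence is I t (arm pulled in round t).
  wsu_pi K eta gamma ell I t i is pi_{t,i} for t >= 1 (index 0 is a dummy, equal to pi_1).\<close>

definition wsu_mix :: "nat \<Rightarrow> real \<Rightarrow> (nat \<Rightarrow> real) \<Rightarrow> nat \<Rightarrow> real" where
  "wsu_mix K gamma p i = (1 - gamma) * p i + gamma / real K"

definition wsu_lhat :: "nat \<Rightarrow> real \<Rightarrow> (nat \<Rightarrow> nat \<Rightarrow> real) \<Rightarrow> (nat \<Rightarrow> nat)
    \<Rightarrow> (nat \<Rightarrow> real) \<Rightarrow> nat \<Rightarrow> nat \<Rightarrow> real" where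
  "wsu_lhat K gamma ell I p t i =
     ell t i * (if I t = i then 1 else 0) / wsu_mix K gamma p i"

fun wsu_pi :: "nat \<Rightarrow> real \<Rightarrow> real \<Rightarrow> (nat \<Rightarrow> nat \<Rightarrow> real) \<Rightarrow> (nat \<Rightarrow> nat)
    \<Rightarrow> nat \<Rightarrow> nat \<Rightarrow> real" where
  "wsu_pi K eta gamma ell I 0 = (\<lambda>i. 1 / real K)"
| "wsu_pi K eta gamma ell I (Suc t) =
     (if t = 0 then (\<lambda>i. 1 / real K)
      else (let p = wsu_pi K eta gamma ell I t;
                lh = wsu_lhat K gamma ell I p t
            in (\<lambda>i. p i * (1 - eta * (lh i - (\<Sum>j\<in>{1..K}. p j * lh j))))))"

definition valid_params :: "nat \<Rightarrow> real \<Rightarrow> real \<Rightarrow> bool" where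
  "valid_params K eta gamma \<longleftrightarrow>
     0 < eta \<and> eta < 1/2 \<and> 0 < gamma \<and> gamma < 1/2 \<and> eta * real K / gamma \<le> 1/2"

text \<open>Two-phase loss sequence for K = 2, T_1 = T div 100.\<close>
definition two_phase_loss :: "nat \<Rightarrow> nat \<Rightarrow> nat \<Rightarrow> real" where
  "two_phase_loss T t i =
     (if t \<le> T div 100 then (if i = 1 then 1 else 0) else (if i = 1 then 0 else 1))"

end

theory Submission
  imports Defs
begin

text \<open>With two arms the weights stay on the simplex, because the importance-weighted losses are at
  most \<open>2/\<gamma>\<close> and \<open>\<eta> \<le> \<gamma>/4\<close>. After \<open>T\<^sub>1\<close> arm 1 has loss 0, so \<open>\<pi>\<^sub>1\<close> never decreases, and a pull of
  arm 2 multiplies \<open>\<pi>\<^sub>1\<close> by \<open>1 + \<eta> \<pi>\<^sub>2 / \<tilde>\<pi>\<^sub>2\<close>, which is at least \<open>1 + \<eta>\<close> while \<open>\<pi>\<^sub>1 \<le> 1/2\<close>.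
  So every one of the \<open>m\<close> pulls adds at least \<open>\<eta> \<pi>\<^sub>t\<^sub>0\<^sub>,\<^sub>1\<close> until \<open>\<pi>\<^sub>1\<close> exceeds
  \<open>1/2 \<ge> 2 \<pi>\<^sub>t\<^sub>0\<^sub>,\<^sub>1\<close>, and \<open>m \<eta> \<ge> 2\<close> pulls therefore suffice.\<close>

lemma wsu_lhat_two:
  "wsu_lhat 2 gamma ell I p t i =
     (if I t = i then ell t i / ((1 - gamma) * p i + gamma / 2) else 0)"
  by (simp add: wsu_lhat_def wsu_mix_def)

lemma wsu_pi_two_Suc:
  fixes eta gamma :: real and ell :: "nat \<Rightarrow> nat \<Rightarrow> real" and I :: "nat \<Rightarrow> nat"
  assumes "0 < t"
  defines "p \<equiv> wsu_pi 2 eta gamma ell I t" and "lh \<equiv> wsu_lhat 2 gamma ell I (wsu_pi 2 eta gamma ell I t) t"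
  shows "wsu_pi 2 eta gamma ell I (Suc t) i = p i * (1 - eta * (lh i - (p 1 * lh 1 + p 2 * lh 2)))"
proof -
  have "{1..2::nat} = {1, 2}" by auto
  then show ?thesis using assms by (simp add: Let_def)
qed

declare wsu_pi.simps(2) [simp del]

lemma eta_wsu_lhat_two_le:
  assumes "valid_params 2 eta gamma" and "0 \<le> p i" and "0 \<le> ell t i" "ell t i \<le> 1"
  shows "0 \<le> wsu_lhat 2 gamma ell I p t i" and "eta * wsu_lhat 2 gamma ell I p t i \<le> 1"
proof -
  define x where "x = (1 - gamma) * p i + gamma / 2"
  have eta: "0 < eta" "eta \<le> gamma / 4" and gamma: "0 < gamma" "gamma < 1/2"
    using assms(1) by (auto simp: valid_params_def field_simps)
  have x: "gamma / 2 \<le> x" using gamma assms(2) by (simp add: x_def)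
  have lh: "wsu_lhat 2 gamma ell I p t i = (if I t = i then ell t i / x else 0)"
    by (simp add: wsu_lhat_two x_def)
  show "0 \<le> wsu_lhat 2 gamma ell I p t i"
    using lh x gamma assms(3) by simp
  have "eta * (ell t i / x) \<le> 1"
  proof -
    have "eta * ell t i \<le> x"
      using eta x gamma assms(3,4) mult_left_le[of "ell t i" eta] by linarith
    then show ?thesis using x gamma by (simp add: pos_divide_le_eq)
  qed
  then show "eta * wsu_lhat 2 gamma ell I p t i \<le> 1"
    using lh eta by simp
qed

text \<open>The update moves mass \<open>\<eta> p q (u\<^sub>1 - u\<^sub>2)\<close> from arm 1 to arm 2.\<close>
lemma two_arm_update_simplex:
  fixes p q u1 u2 eta :: real
  assumes "0 \<le> p" "0 \<le> q" "p + q = 1" and "0 \<le> eta"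
    and "0 \<le> u1" "0 \<le> u2" "eta * u1 \<le> 1" "eta * u2 \<le> 1"
  shows "0 \<le> p * (1 - eta * (u1 - (p * u1 + q * u2)))"
    and "0 \<le> q * (1 - eta * (u2 - (p * u1 + q * u2)))"
    and "p * (1 - eta * (u1 - (p * u1 + q * u2))) + q * (1 - eta * (u2 - (p * u1 + q * u2))) = 1"
proof -
  have p: "p = 1 - q" using assms(3) by simp
  have d1: "u1 - (p * u1 + q * u2) = q * (u1 - u2)" and d2: "u2 - (p * u1 + q * u2) = p * (u2 - u1)"
    by (simp_all add: p algebra_simps)
  have "q * (u1 - u2) \<le> u1"
    unfolding right_diff_distrib using assms mult_left_le_one_le[of u1 q] mult_nonneg_nonneg[of q u2] by linarith
  then have "eta * (q * (u1 - u2)) \<le> eta * u1"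
    using assms(4) by (rule mult_left_mono)
  then show "0 \<le> p * (1 - eta * (u1 - (p * u1 + q * u2)))"
    using assms d1 by simp
  have "p * (u2 - u1) \<le> u2"
    unfolding right_diff_distrib using assms mult_left_le_one_le[of u2 p] mult_nonneg_nonneg[of p u1] by linarith
  then have "eta * (p * (u2 - u1)) \<le> eta * u2"
    using assms(4) by (rule mult_left_mono)
  then show "0 \<le> q * (1 - eta * (u2 - (p * u1 + q * u2)))"
    using assms d2 by simp
  show "p * (1 - eta * (u1 - (p * u1 + q * u2))) + q * (1 - eta * (u2 - (p * u1 + q * u2))) = 1"
    unfolding d1 d2 using assms(3) by (simp add: algebra_simps)
qed

lemma wsu_pi_two_simplex:
  assumes "valid_params 2 eta gamma" and "\<And>t i. 0 \<le> ell t i \<and> ell t i \<le> 1"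
  shows "0 \<le> wsu_pi 2 eta gamma ell I t 1 \<and> 0 \<le> wsu_pi 2 eta gamma ell I t 2
    \<and> wsu_pi 2 eta gamma ell I t 1 + wsu_pi 2 eta gamma ell I t 2 = 1"
proof (induction t)
  case 0
  then show ?case by simp
next
  case (Suc t)
  show ?case
  proof (cases "t = 0")
    case True
    then show ?thesis by (simp add: wsu_pi.simps)
  next
    case False
    then have "0 < t" by simp
    define p where "p = wsu_pi 2 eta gamma ell I t"
    define lh where "lh = wsu_lhat 2 gamma ell I p t"
    have p: "0 \<le> p 1" "0 \<le> p 2" "p 1 + p 2 = 1" using Suc.IH by (simp_all add: p_def)
    have eta: "0 \<le> eta" using assms(1) by (simp add: valid_params_def)
    have "0 \<le> lh i \<and> eta * lh i \<le> 1" if "0 \<le> p i" for i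
      using eta_wsu_lhat_two_le[where p=p and i=i, OF assms(1) that] assms(2) by (simp add: lh_def)
    then have "0 \<le> lh 1" "0 \<le> lh 2" "eta * lh 1 \<le> 1" "eta * lh 2 \<le> 1"
      using p by auto
    from two_arm_update_simplex[OF p eta this] show ?thesis
      unfolding wsu_pi_two_Suc[OF \<open>0 < t\<close>] by (simp add: p_def lh_def)
  qed
qed

lemma two_phase_loss_bounds: "0 \<le> two_phase_loss T t i \<and> two_phase_loss T t i \<le> 1"
  by (simp add: two_phase_loss_def)

lemma two_phase_pi_Suc:
  fixes eta gamma :: real and I :: "nat \<Rightarrow> nat"
  assumes "T div 100 < t"
  defines "p \<equiv> wsu_pi 2 eta gamma (two_phase_loss T) I t"
  shows "wsu_pi 2 eta gamma (two_phase_loss T) I (Suc t) 1 =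
    (if I t = 2 then p 1 * (1 + eta * (p 2 / ((1 - gamma) * p 2 + gamma / 2))) else p 1)"
proof -
  have "0 < t" using assms(1) by simp
  then show ?thesis
    using assms(1) unfolding p_def
    by (simp add: wsu_pi_two_Suc wsu_lhat_two two_phase_loss_def)
qed

lemma two_phase_pi_mono:
  assumes "valid_params 2 eta gamma"
  shows "mono_on {Suc (T div 100)..} (\<lambda>t. wsu_pi 2 eta gamma (two_phase_loss T) I t 1)"
proof -
  let ?\<pi> = "wsu_pi 2 eta gamma (two_phase_loss T) I"
  have grows: "?\<pi> t 1 \<le> ?\<pi> (Suc t) 1" if "T div 100 < t" for t
  proof -
    have p: "0 \<le> ?\<pi> t 1" "0 \<le> ?\<pi> t 2"
      using wsu_pi_two_simplex[OF assms two_phase_loss_bounds] by auto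
    have "0 < gamma" "gamma < 1/2" "0 < eta"
      using assms by (auto simp: valid_params_def)
    then have "0 \<le> eta * (?\<pi> t 2 / ((1 - gamma) * ?\<pi> t 2 + gamma / 2))"
      using p by simp
    then have "?\<pi> t 1 * 1 \<le> ?\<pi> t 1 * (1 + eta * (?\<pi> t 2 / ((1 - gamma) * ?\<pi> t 2 + gamma / 2)))"
      using p by (intro mult_left_mono) auto
    then show ?thesis
      unfolding two_phase_pi_Suc[OF that] by simp
  qed
  show ?thesis
  proof (rule mono_onI)
    fix a b assume a: "a \<in> {Suc (T div 100)..}" and "b \<in> {Suc (T div 100)..}" and "a \<le> b"
    from \<open>a \<le> b\<close> show "?\<pi> a 1 \<le> ?\<pi> b 1"
    proof (induction b rule: dec_induct)
      case (step n)
      then show ?case using a grows[of n] by simp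
    qed simp
  qed
qed

text \<open>While \<open>\<pi>\<^sub>1 \<le> 1/2\<close>, the mixture weight of arm 2 is below \<open>\<pi>\<^sub>2\<close>, so the importance weight
  \<open>\<pi>\<^sub>2 / \<tilde>\<pi>\<^sub>2\<close> of its loss is at least 1.\<close>
lemma two_phase_pi_growth:
  assumes "valid_params 2 eta gamma" and "T div 100 < t" and "I t = 2"
    and "wsu_pi 2 eta gamma (two_phase_loss T) I t 1 \<le> 1/2"
  shows "wsu_pi 2 eta gamma (two_phase_loss T) I t 1 * (1 + eta)
    \<le> wsu_pi 2 eta gamma (two_phase_loss T) I (Suc t) 1"
proof -
  define p where "p = wsu_pi 2 eta gamma (two_phase_loss T) I t"
  define x where "x = (1 - gamma) * p 2 + gamma / 2"
  have p: "0 \<le> p 1" "p 1 + p 2 = 1"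
    using wsu_pi_two_simplex[OF assms(1) two_phase_loss_bounds] by (auto simp: p_def)
  have gamma: "0 < gamma" "gamma < 1/2" and eta: "0 < eta"
    using assms(1) by (auto simp: valid_params_def)
  have "1/2 \<le> p 2" using p assms(4) by (simp add: p_def)
  then have "gamma / 2 \<le> gamma * p 2"
    using mult_left_mono[of "1/2" "p 2" gamma] gamma by simp
  then have "x \<le> p 2"
    by (simp add: x_def algebra_simps)
  have "0 < x"
    using gamma \<open>1/2 \<le> p 2\<close> by (simp add: x_def add_nonneg_pos)
  with \<open>x \<le> p 2\<close> have "eta * 1 \<le> eta * (p 2 / x)"
    using eta by (intro mult_left_mono) simp_all
  then have "p 1 * (1 + eta) \<le> p 1 * (1 + eta * (p 2 / x))"
    using p by (intro mult_left_mono) auto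
  then show ?thesis
    using assms(3) unfolding two_phase_pi_Suc[OF assms(2)] by (simp add: p_def x_def)
qed

lemma two_phase_pi_gain:
  assumes "valid_params 2 eta gamma" and "T div 100 < t0" "t0 \<le> t" and "I t = 2"
    and "wsu_pi 2 eta gamma (two_phase_loss T) I t 1 \<le> 1/2"
  shows "wsu_pi 2 eta gamma (two_phase_loss T) I t 1 + eta * wsu_pi 2 eta gamma (two_phase_loss T) I t0 1
    \<le> wsu_pi 2 eta gamma (two_phase_loss T) I (Suc t) 1"
proof -
  let ?\<pi>\<^sub>1 = "\<lambda>t. wsu_pi 2 eta gamma (two_phase_loss T) I t 1"
  have "?\<pi>\<^sub>1 t0 \<le> ?\<pi>\<^sub>1 t"
    using assms(2,3) by (intro mono_onD[OF two_phase_pi_mono[OF assms(1)]]) auto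
  then have "eta * ?\<pi>\<^sub>1 t0 \<le> eta * ?\<pi>\<^sub>1 t"
    using assms(1) by (simp add: valid_params_def)
  moreover have "?\<pi>\<^sub>1 t * (1 + eta) \<le> ?\<pi>\<^sub>1 (Suc t)"
    using two_phase_pi_growth[OF assms(1) _ assms(4,5)] assms(2,3) by simp
  ultimately show ?thesis
    by (simp add: algebra_simps)
qed

lemma mono_on_increments_accumulate:
  fixes f :: "nat \<Rightarrow> real" and ts :: "nat \<Rightarrow> nat"
  assumes "mono_on {t0..} f" and "strict_mono_on {1..m} ts" and "t0 \<le> ts 1"
    and gain: "\<And>k. k \<in> {1..m} \<Longrightarrow> f (ts k) \<le> B \<Longrightarrow> f (ts k) + c \<le> f (Suc (ts k))"
    and "0 \<le> c" and "1 \<le> m"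
  shows "min B (f t0 + real m * c) \<le> f (Suc (ts m))"
proof -
  have ts_ge: "t0 \<le> ts k" if "k \<in> {1..m}" for k
    using assms(3) strict_mono_on_leD[OF assms(2), of 1 k] that by auto
  have advance: "min B (x + c) \<le> f (Suc (ts k))" if "min B x \<le> f (ts k)" "k \<in> {1..m}" for x k
  proof (cases "f (ts k) \<le> B")
    case True
    then show ?thesis using that gain[OF that(2)] assms(5) by (auto simp: min_le_iff_disj)
  next
    case False
    have "f (ts k) \<le> f (Suc (ts k))"
      using ts_ge[OF that(2)] by (intro mono_onD[OF assms(1)]) auto
    then show ?thesis using False by (simp add: min_le_iff_disj)
  qed
  have "k \<le> m \<Longrightarrow> min B (f t0 + real k * c) \<le> f (Suc (ts k))" if "1 \<le> k" for k
    using that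
  proof (induction k rule: dec_induct)
    case base
    have "f t0 \<le> f (ts 1)"
      using assms(3) by (intro mono_onD[OF assms(1)]) auto
    then show ?case using advance[of "f t0" 1] base by simp
  next
    case (step k)
    have "ts k < ts (Suc k)"
      using step strict_mono_onD[OF assms(2)] by auto
    then have "f (Suc (ts k)) \<le> f (ts (Suc k))"
      using ts_ge[of k] step by (intro mono_onD[OF assms(1)]) auto
    then have "min B (f t0 + real k * c) \<le> f (ts (Suc k))"
      using step by simp
    from advance[OF this] show ?case
      using step by (simp add: algebra_simps)
  qed
  then show ?thesis using assms(6) by simp
qed

theorem mainTheorem15:
  fixes T t0 m :: nat and eta gamma :: real and I ts :: "nat \<Rightarrow> nat"
  assumes "T \<ge> 1" and "100 dvd T"
    and "valid_params 2 eta gamma"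
    and "\<forall>t. I t \<in> {1, 2}"
    and "T div 100 < t0"
    and "0 < wsu_pi 2 eta gamma (two_phase_loss T) I t0 1"
    and "wsu_pi 2 eta gamma (two_phase_loss T) I t0 1 \<le> 1/4"
    and "strict_mono_on {1..m} ts"
    and "t0 \<le> ts 1" and "ts m \<le> T"
    and "\<forall>k\<in>{1..m}. I (ts k) = 2"
    and "real m \<ge> 2 / eta * (1 / (1 - 2 * wsu_pi 2 eta gamma (two_phase_loss T) I t0 1))"
  shows "wsu_pi 2 eta gamma (two_phase_loss T) I (ts m + 1) 1
           \<ge> 2 * wsu_pi 2 eta gamma (two_phase_loss T) I t0 1"
proof -
  let ?\<pi>\<^sub>1 = "\<lambda>t. wsu_pi 2 eta gamma (two_phase_loss T) I t 1"
  define p0 where "p0 = ?\<pi>\<^sub>1 t0"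
  have p0: "0 < p0" "p0 \<le> 1/4" and eta: "0 < eta"
    using assms(3,6,7) by (auto simp: p0_def valid_params_def)
  have "2 / eta * 1 \<le> real m"
    using assms(12) p0 eta mult_left_mono[of 1 "1 / (1 - 2 * p0)" "2 / eta"] by (simp add: p0_def)
  then have m_eta: "2 \<le> real m * eta" and "1 \<le> m"
    using eta by (simp_all add: field_simps) (cases m, auto)
  have mono: "mono_on {t0..} ?\<pi>\<^sub>1"
    using two_phase_pi_mono[OF assms(3)] by (rule mono_on_subset) (use assms(5) in auto)
  have gain: "?\<pi>\<^sub>1 (ts k) + eta * ?\<pi>\<^sub>1 t0 \<le> ?\<pi>\<^sub>1 (Suc (ts k))"
    if "k \<in> {1..m}" and "?\<pi>\<^sub>1 (ts k) \<le> 1/2" for k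
    using two_phase_pi_gain[OF assms(3,5) _ _ that(2)] assms(9,11) that(1)
      strict_mono_on_leD[OF assms(8), of 1 k] by auto
  have "2 * p0 \<le> min (1/2) (p0 + real m * (eta * p0))"
    using mult_right_mono[OF m_eta, of p0] p0 by (simp add: algebra_simps)
  also have "\<dots> \<le> ?\<pi>\<^sub>1 (Suc (ts m))"
    unfolding p0_def using eta p0 \<open>1 \<le> m\<close>
    by (intro mono_on_increments_accumulate[OF mono assms(8,9) gain]) (auto simp: p0_def)
  finally show ?thesis
    by (simp add: p0_def)
qed

end
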